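(* Let $H_0$ be a lattice Hamiltonian satisfying the Lieb–Robinson bound described in the context, let $\gamma>0$ and let $G$ be an even integrable filter function. If $O$ is an operator supported on a set $A$, then for every $l$ there is an operator $W^l_{\gamma,G}(O)$ supported on $b_l(A)$ such that $$\Vert W_{\gamma,G}(O)-W^l_{\gamma,G}(O)\Vert\le\Bigl\{\int_{|u|\ge l\gamma/v_{LR}}|G(u)|\,du+g(l)|A|\int|G(u)|\,du\Bigr\}\Vert O\Vert.$$
   Context: Finite lattice with metric ${\rm dist}$, finite-dimensional site Hilbert spaces; $H_0=\sum_Z H_Z$ with $H_Z$ Hermitian supported on $Z$, ${\rm diam}(Z)\le R$, $\sup_i\sum_{Z\ni i}\Vert H_Z\Vert\le J$. $b_l(A)$ = sites within distance $l$ of $A$, $|A|$ = cardinality. Lieb–Robinson bound: there are $v_{LR}>0$ and a function $g$ (decaying faster than exponentially in $l/R$) such that for any $O$ supported on $A$, any $l$ and any $|t|\le l/v_{LR}$, $e^{iH_0t}Oe^{-iH_0t}$ can be approximated by an operator supported on $b_l(A)$ within operator-norm error $\frac{v_{LR}|t|}{l}g(l)|A|\Vert O\Vert$. The operator filtered below energy $\gamma$ is $W_{\gamma,G}(O)=\gamma\int dt\,G(\gamma t)e^{iH_0t}Oe^{-iH_0t}$, where the filter $G$ is an even, rapidly decaying function whose Fourier transform $\tilde G(\omega)=\int G(t)e^{i\omega t}dt$ is close to $0$ for $|\omega|\ge1$ and close to $1$ for $|\omega|\le 1/2$. *)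

theory Defs
  imports "HOL-Analysis.Analysis"
begin

text \<open>Sites form the finite type 'a (a finite metric space).
 Site i carries the Hilbert space C^(d i). Basis states of the full Hilbert space are
 configurations sigma with sigma i < d i. Operators are given by their matrix entries
 on configurations (entries outside the configuration set are irrelevant).\<close>

type_synonym 'a cfg = "'a \<Rightarrow> nat"
type_synonym 'a qop = "'a cfg \<Rightarrow> 'a cfg \<Rightarrow> complex"

definition conf :: "('a \<Rightarrow> nat) \<Rightarrow> 'a cfg set" where
  "conf d = {\<sigma>. \<forall>i. \<sigma> i < d i}"

definition op_mult :: "('a \<Rightarrow> nat) \<Rightarrow> 'a qop \<Rightarrow> 'a qop \<Rightarrow> 'a qop" where
  "op_mult d X Y = (\<lambda>\<sigma> \<tau>. \<Sum>\<rho>\<in>conf d. X \<sigma> \<rho> * Y \<rho> \<tau>)"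

definition op_id :: "'a qop" where
  "op_id = (\<lambda>\<sigma> \<tau>. if \<sigma> = \<tau> then 1 else 0)"

primrec op_pow :: "('a \<Rightarrow> nat) \<Rightarrow> 'a qop \<Rightarrow> nat \<Rightarrow> 'a qop" where
  "op_pow d X 0 = op_id"
| "op_pow d X (Suc k) = op_mult d X (op_pow d X k)"

definition op_exp :: "('a \<Rightarrow> nat) \<Rightarrow> 'a qop \<Rightarrow> 'a qop" where
  "op_exp d X = (\<lambda>\<sigma> \<tau>. \<Sum>k. op_pow d X k \<sigma> \<tau> / of_nat (fact k))"

definition op_diff :: "'a qop \<Rightarrow> 'a qop \<Rightarrow> 'a qop" where
  "op_diff X Y = (\<lambda>\<sigma> \<tau>. X \<sigma> \<tau> - Y \<sigma> \<tau>)"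

definition op_apply :: "('a \<Rightarrow> nat) \<Rightarrow> 'a qop \<Rightarrow> ('a cfg \<Rightarrow> complex) \<Rightarrow> ('a cfg \<Rightarrow> complex)" where
  "op_apply d X v = (\<lambda>\<sigma>. \<Sum>\<tau>\<in>conf d. X \<sigma> \<tau> * v \<tau>)"

definition vec_norm :: "('a \<Rightarrow> nat) \<Rightarrow> ('a cfg \<Rightarrow> complex) \<Rightarrow> real" where
  "vec_norm d v = sqrt (\<Sum>\<sigma>\<in>conf d. (cmod (v \<sigma>))^2)"

definition op_norm :: "('a \<Rightarrow> nat) \<Rightarrow> 'a qop \<Rightarrow> real" where
  "op_norm d X = Sup {vec_norm d (op_apply d X v) | v. vec_norm d v \<le> 1}"

definition hermitian :: "('a \<Rightarrow> nat) \<Rightarrow> 'a qop \<Rightarrow> bool" where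
  "hermitian d X = (\<forall>\<sigma>\<in>conf d. \<forall>\<tau>\<in>conf d. X \<sigma> \<tau> = cnj (X \<tau> \<sigma>))"

text \<open>X is supported on A: X = M_A tensor identity on the complement of A.\<close>
definition supported_on :: "('a \<Rightarrow> nat) \<Rightarrow> 'a set \<Rightarrow> 'a qop \<Rightarrow> bool" where
  "supported_on d A X = (\<exists>M :: 'a qop. \<forall>\<sigma>\<in>conf d. \<forall>\<tau>\<in>conf d.
      X \<sigma> \<tau> = (if (\<forall>i. i \<notin> A \<longrightarrow> \<sigma> i = \<tau> i)
                 then M (\<lambda>i. if i \<in> A then \<sigma> i else 0) (\<lambda>i. if i \<in> A then \<tau> i else 0)
                 else 0))"

definition heis :: "('a \<Rightarrow> nat) \<Rightarrow> 'a qop \<Rightarrow> real \<Rightarrow> 'a qop \<Rightarrow> 'a qop" where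
  "heis d H t X = op_mult d (op_mult d (op_exp d (\<lambda>\<sigma> \<tau>. \<i> * of_real t * H \<sigma> \<tau>)) X)
                              (op_exp d (\<lambda>\<sigma> \<tau>. - \<i> * of_real t * H \<sigma> \<tau>))"

definition bl :: "real \<Rightarrow> 'a::metric_space set \<Rightarrow> 'a set" where
  "bl l A = {x. \<exists>y\<in>A. dist x y \<le> l}"

definition filtered :: "('a \<Rightarrow> nat) \<Rightarrow> 'a qop \<Rightarrow> real \<Rightarrow> (real \<Rightarrow> real) \<Rightarrow> 'a qop \<Rightarrow> 'a qop" where
  "filtered d H \<gamma> G X = (\<lambda>\<sigma> \<tau>. of_real \<gamma> * (LINT t|lborel. of_real (G (\<gamma> * t)) * heis d H t X \<sigma> \<tau>))"

end

theory Submission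
  imports Defs
begin

text \<open>\<open>W\<close> is obtained by filtering a family of local approximants of the Heisenberg evolution:
  \<open>W = \<gamma> \<integral> G(\<gamma> t) Y(t) dt\<close>, where \<open>Y(t)\<close> is supported on \<open>b_l(A)\<close> and approximates
  \<open>exp(iH t) O exp(-iH t)\<close> inside the Lieb-Robinson cone \<open>|t| < T = l / v_LR\<close>, and \<open>Y(t) = 0\<close>
  outside it. Outside the cone the error is at most \<open>\<parallel>O\<parallel>\<close> because the evolution is unitary; after
  the substitution \<open>u = \<gamma> t\<close> this gives the tail integral. Inside the cone the Lieb-Robinson bound
  gives the error \<open>g(l) |A| \<parallel>O\<parallel> |t| / T \<le> g(l) |A| \<parallel>O\<parallel>\<close>. For \<open>W\<close> to be defined, \<open>Y\<close> has to be
  measurable in \<open>t\<close>, so the approximants are chosen on a fine grid and held constant in between;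
  continuity of the evolution makes the extra error an arbitrarily small \<open>\<omega>\<close>, which the slack in
  \<open>|t| / T \<le> 1\<close> absorbs.\<close>

section \<open>Configurations and support\<close>

lemma finite_conf: "finite (conf (d :: 'a::finite \<Rightarrow> nat))"
proof -
  have "conf d = PiE UNIV (\<lambda>i. {..<d i})"
    unfolding conf_def PiE_UNIV_domain by (auto simp: Pi_def)
  then show ?thesis by (simp add: finite_PiE)
qed

definition cfg_restrict :: "'a set \<Rightarrow> 'a cfg \<Rightarrow> 'a cfg" where
  "cfg_restrict S \<sigma> = (\<lambda>i. if i \<in> S then \<sigma> i else 0)"

definition agree_off :: "'a set \<Rightarrow> 'a cfg \<Rightarrow> 'a cfg \<Rightarrow> bool" where
  "agree_off S \<sigma> \<tau> \<longleftrightarrow> (\<forall>i. i \<notin> S \<longrightarrow> \<sigma> i = \<tau> i)"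

lemma cfg_restrict_idem [simp]: "cfg_restrict S (cfg_restrict S \<sigma>) = cfg_restrict S \<sigma>"
  unfolding cfg_restrict_def by auto

lemma cfg_restrict_in_conf: "\<forall>i. d i \<ge> 1 \<Longrightarrow> \<sigma> \<in> conf d \<Longrightarrow> cfg_restrict S \<sigma> \<in> conf d"
  unfolding conf_def cfg_restrict_def by (auto simp: Suc_le_eq)

lemma supported_on_altdef:
  "supported_on d S X \<longleftrightarrow> (\<exists>M. \<forall>\<sigma>\<in>conf d. \<forall>\<tau>\<in>conf d.
     X \<sigma> \<tau> = (if agree_off S \<sigma> \<tau> then M (cfg_restrict S \<sigma>) (cfg_restrict S \<tau>) else 0))"
  by (simp only: supported_on_def agree_off_def cfg_restrict_def)

lemma supported_on_iff:
  assumes dims: "\<forall>i. d i \<ge> 1"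
  shows "supported_on d S X \<longleftrightarrow> (\<forall>\<sigma>\<in>conf d. \<forall>\<tau>\<in>conf d.
     X \<sigma> \<tau> = (if agree_off S \<sigma> \<tau> then X (cfg_restrict S \<sigma>) (cfg_restrict S \<tau>) else 0))"
    (is "_ \<longleftrightarrow> ?rhs")
proof
  assume "supported_on d S X"
  then obtain M where M: "\<forall>\<sigma>\<in>conf d. \<forall>\<tau>\<in>conf d.
      X \<sigma> \<tau> = (if agree_off S \<sigma> \<tau> then M (cfg_restrict S \<sigma>) (cfg_restrict S \<tau>) else 0)"
    unfolding supported_on_altdef by blast
  have "X (cfg_restrict S \<sigma>) (cfg_restrict S \<tau>) = M (cfg_restrict S \<sigma>) (cfg_restrict S \<tau>)"
    if "\<sigma> \<in> conf d" "\<tau> \<in> conf d" for \<sigma> \<tau>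
  proof -
    have "agree_off S (cfg_restrict S \<sigma>) (cfg_restrict S \<tau>)"
      by (simp add: agree_off_def cfg_restrict_def)
    then show ?thesis
      using M cfg_restrict_in_conf[OF dims that(1)] cfg_restrict_in_conf[OF dims that(2)] by simp
  qed
  then show ?rhs using M by auto
next
  assume ?rhs
  then show "supported_on d S X" unfolding supported_on_altdef by blast
qed

lemma supported_on_zero: "supported_on d S (\<lambda>_ _. 0)"
  unfolding supported_on_altdef by (intro exI[of _ "\<lambda>_ _. 0"]) auto

lemma supported_on_scale:
  assumes "supported_on d S X"
  shows "supported_on d S (\<lambda>\<sigma> \<tau>. c * X \<sigma> \<tau>)"
proof -
  obtain M where "\<forall>\<sigma>\<in>conf d. \<forall>\<tau>\<in>conf d.
      X \<sigma> \<tau> = (if agree_off S \<sigma> \<tau> then M (cfg_restrict S \<sigma>) (cfg_restrict S \<tau>) else 0)"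
    using assms unfolding supported_on_altdef by blast
  then show ?thesis
    unfolding supported_on_altdef by (intro exI[of _ "\<lambda>\<sigma> \<tau>. c * M \<sigma> \<tau>"]) auto
qed

lemma supported_on_cong:
  assumes "\<And>\<sigma> \<tau>. \<sigma> \<in> conf d \<Longrightarrow> \<tau> \<in> conf d \<Longrightarrow> X \<sigma> \<tau> = Y \<sigma> \<tau>"
    and "supported_on d S X"
  shows "supported_on d S Y"
  using assms unfolding supported_on_altdef by simp

lemma supported_on_integral:
  assumes dims: "\<forall>i. d i \<ge> 1" and supp: "\<And>t. supported_on d S (Y t)"
  shows "supported_on d S (\<lambda>\<sigma> \<tau>. LINT t|M. Y t \<sigma> \<tau>)"
  unfolding supported_on_iff[OF dims]
proof (intro ballI)
  fix \<sigma> \<tau> assume "\<sigma> \<in> conf d" "\<tau> \<in> conf d"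
  then have "Y t \<sigma> \<tau> = (if agree_off S \<sigma> \<tau> then Y t (cfg_restrict S \<sigma>) (cfg_restrict S \<tau>) else 0)" for t
    using supp[of t] unfolding supported_on_iff[OF dims] by blast
  then show "(LINT t|M. Y t \<sigma> \<tau>) = (if agree_off S \<sigma> \<tau>
      then LINT t|M. Y t (cfg_restrict S \<sigma>) (cfg_restrict S \<tau>) else 0)"
    by simp
qed

section \<open>Vector and operator norms\<close>

lemma vec_norm_eq_L2_set: "vec_norm d v = L2_set (\<lambda>\<sigma>. cmod (v \<sigma>)) (conf d)"
  unfolding vec_norm_def L2_set_def by simp

lemma vec_norm_nonneg: "vec_norm d v \<ge> 0"
  unfolding vec_norm_def by (simp add: sum_nonneg)

lemma norm_le_vec_norm:
  fixes d :: "'a::finite \<Rightarrow> nat"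
  shows "\<sigma> \<in> conf d \<Longrightarrow> cmod (v \<sigma>) \<le> vec_norm d v"
  unfolding vec_norm_eq_L2_set by (rule member_le_L2_set[OF finite_conf])

lemma vec_norm_scale: "vec_norm d (\<lambda>\<sigma>. c * v \<sigma>) = cmod c * vec_norm d v"
  unfolding vec_norm_def
  by (simp add: norm_mult power_mult_distrib sum_distrib_left[symmetric] real_sqrt_mult)

lemma vec_norm_cong:
  "(\<And>\<sigma>. \<sigma> \<in> conf d \<Longrightarrow> v \<sigma> = w \<sigma>) \<Longrightarrow> vec_norm d v = vec_norm d w"
  unfolding vec_norm_def by (simp cong: sum.cong)

lemma vec_norm_diff_le:
  fixes d :: "'a::finite \<Rightarrow> nat"
  shows "vec_norm d (\<lambda>\<sigma>. v \<sigma> - w \<sigma>) \<le> vec_norm d v + vec_norm d w"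
proof -
  have "vec_norm d (\<lambda>\<sigma>. v \<sigma> - w \<sigma>) \<le> L2_set (\<lambda>\<sigma>. cmod (v \<sigma>) + cmod (w \<sigma>)) (conf d)"
    unfolding vec_norm_eq_L2_set by (rule L2_set_mono) (auto simp: norm_triangle_ineq4)
  also have "\<dots> \<le> vec_norm d v + vec_norm d w"
    unfolding vec_norm_eq_L2_set by (rule L2_set_triangle_ineq)
  finally show ?thesis .
qed

lemma of_real_vec_norm_square:
  "complex_of_real ((vec_norm d v)\<^sup>2) = (\<Sum>\<sigma>\<in>conf d. cnj (v \<sigma>) * v \<sigma>)"
proof -
  have "(vec_norm d v)\<^sup>2 = (\<Sum>\<sigma>\<in>conf d. (cmod (v \<sigma>))\<^sup>2)"
    unfolding vec_norm_def by (simp add: sum_nonneg)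
  moreover have "complex_of_real ((cmod x)\<^sup>2) = cnj x * x" for x :: complex
    by (metis complex_norm_square of_real_power mult.commute)
  ultimately show ?thesis by simp
qed

lemma norm_inner_le_vec_norm:
  "cmod (\<Sum>\<sigma>\<in>conf d. cnj (w \<sigma>) * u \<sigma>) \<le> vec_norm d w * vec_norm d u"
proof -
  have "cmod (\<Sum>\<sigma>\<in>conf d. cnj (w \<sigma>) * u \<sigma>) \<le> (\<Sum>\<sigma>\<in>conf d. cmod (w \<sigma>) * cmod (u \<sigma>))"
    by (rule order_trans[OF norm_sum]) (simp add: norm_mult)
  also have "\<dots> \<le> vec_norm d w * vec_norm d u"
    unfolding vec_norm_eq_L2_set using L2_set_mult_ineq[of "\<lambda>\<sigma>. cmod (w \<sigma>)" "\<lambda>\<sigma>. cmod (u \<sigma>)" "conf d"]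
    by simp
  finally show ?thesis .
qed

definition entry_sum :: "('a \<Rightarrow> nat) \<Rightarrow> 'a qop \<Rightarrow> real" where
  "entry_sum d X = (\<Sum>\<sigma>\<in>conf d. \<Sum>\<tau>\<in>conf d. cmod (X \<sigma> \<tau>))"

lemma entry_sum_nonneg: "entry_sum d X \<ge> 0"
  unfolding entry_sum_def by (simp add: sum_nonneg)

lemma row_sum_le_entry_sum:
  fixes d :: "'a::finite \<Rightarrow> nat"
  shows "\<sigma> \<in> conf d \<Longrightarrow> (\<Sum>\<rho>\<in>conf d. cmod (X \<sigma> \<rho>)) \<le> entry_sum d X"
  unfolding entry_sum_def
  by (rule member_le_sum[where f="\<lambda>\<sigma>. \<Sum>\<rho>\<in>conf d. cmod (X \<sigma> \<rho>)"]) (auto simp: sum_nonneg finite_conf)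

lemma vec_norm_op_apply_le_entry_sum:
  fixes d :: "'a::finite \<Rightarrow> nat"
  assumes v: "vec_norm d v \<le> 1"
  shows "vec_norm d (op_apply d X v) \<le> entry_sum d X"
proof -
  have "vec_norm d (op_apply d X v) \<le> (\<Sum>\<sigma>\<in>conf d. \<bar>cmod (op_apply d X v \<sigma>)\<bar>)"
    unfolding vec_norm_eq_L2_set by (rule L2_set_le_sum_abs)
  also have "\<dots> \<le> (\<Sum>\<sigma>\<in>conf d. \<Sum>\<tau>\<in>conf d. cmod (X \<sigma> \<tau>))"
  proof (rule sum_mono)
    fix \<sigma>
    have "\<bar>cmod (op_apply d X v \<sigma>)\<bar> \<le> (\<Sum>\<tau>\<in>conf d. cmod (X \<sigma> \<tau>) * cmod (v \<tau>))"
      unfolding op_apply_def by (simp add: order_trans[OF norm_sum] norm_mult)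
    also have "\<dots> \<le> (\<Sum>\<tau>\<in>conf d. cmod (X \<sigma> \<tau>))"
    proof (rule sum_mono)
      fix \<tau> assume "\<tau> \<in> conf d"
      then have "cmod (v \<tau>) \<le> 1" using norm_le_vec_norm[of \<tau> d v] v by linarith
      then show "cmod (X \<sigma> \<tau>) * cmod (v \<tau>) \<le> cmod (X \<sigma> \<tau>)" by (simp add: mult_left_le)
    qed
    finally show "\<bar>cmod (op_apply d X v \<sigma>)\<bar> \<le> (\<Sum>\<tau>\<in>conf d. cmod (X \<sigma> \<tau>))" .
  qed
  finally show ?thesis unfolding entry_sum_def .
qed

lemma bdd_above_op_norm_set:
  fixes d :: "'a::finite \<Rightarrow> nat"
  shows "bdd_above {vec_norm d (op_apply d X v) | v. vec_norm d v \<le> 1}"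
  using vec_norm_op_apply_le_entry_sum by (intro bdd_aboveI) blast

lemma vec_norm_op_apply_le_op_norm:
  fixes d :: "'a::finite \<Rightarrow> nat"
  shows "vec_norm d v \<le> 1 \<Longrightarrow> vec_norm d (op_apply d X v) \<le> op_norm d X"
  unfolding op_norm_def by (rule cSup_upper[OF _ bdd_above_op_norm_set]) auto

lemma op_norm_leI:
  "(\<And>v. vec_norm d v \<le> 1 \<Longrightarrow> vec_norm d (op_apply d X v) \<le> c) \<Longrightarrow> op_norm d X \<le> c"
  unfolding op_norm_def
  by (rule cSup_least) (auto simp: vec_norm_def intro: exI[of _ "\<lambda>_. 0"])

lemma op_norm_nonneg:
  fixes d :: "'a::finite \<Rightarrow> nat"
  shows "op_norm d X \<ge> 0"
proof -
  have "vec_norm d (\<lambda>_. 0) \<le> 1" by (simp add: vec_norm_def)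
  from vec_norm_op_apply_le_op_norm[OF this] show ?thesis
    using vec_norm_nonneg order_trans by blast
qed

lemma op_norm_le_entry_sum:
  fixes d :: "'a::finite \<Rightarrow> nat"
  shows "op_norm d X \<le> entry_sum d X"
  by (rule op_norm_leI) (rule vec_norm_op_apply_le_entry_sum)

lemma norm_entry_le_op_norm:
  fixes d :: "'a::finite \<Rightarrow> nat"
  assumes "\<sigma> \<in> conf d" "\<tau> \<in> conf d"
  shows "cmod (X \<sigma> \<tau>) \<le> op_norm d X"
proof -
  define e where "e = (\<lambda>\<rho>. if \<rho> = \<tau> then (1::complex) else 0)"
  have "(\<Sum>\<sigma>\<in>conf d. (cmod (e \<sigma>))\<^sup>2) = (\<Sum>\<sigma>\<in>conf d. if \<sigma> = \<tau> then 1 else 0)"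
    unfolding e_def by (rule sum.cong) auto
  then have "vec_norm d e = 1"
    unfolding vec_norm_def using assms(2) finite_conf[of d] by simp
  moreover have "op_apply d X e \<sigma> = X \<sigma> \<tau>"
    unfolding op_apply_def e_def using assms(2) finite_conf[of d]
    by (simp add: if_distrib sum.delta cong: if_cong)
  ultimately show ?thesis
    using norm_le_vec_norm[OF assms(1), of "op_apply d X e"] vec_norm_op_apply_le_op_norm[of d e X]
    by simp
qed

lemma op_norm_cong:
  fixes d :: "'a::finite \<Rightarrow> nat"
  assumes "\<And>\<sigma> \<tau>. \<sigma> \<in> conf d \<Longrightarrow> \<tau> \<in> conf d \<Longrightarrow> X \<sigma> \<tau> = Y \<sigma> \<tau>"
  shows "op_norm d X = op_norm d Y"
proof -
  have "vec_norm d (op_apply d X v) = vec_norm d (op_apply d Y v)" for v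
    by (rule vec_norm_cong) (auto simp: op_apply_def assms intro!: sum.cong)
  then show ?thesis unfolding op_norm_def by simp
qed

lemma op_norm_scale_le:
  fixes d :: "'a::finite \<Rightarrow> nat"
  shows "op_norm d (\<lambda>\<sigma> \<tau>. c * X \<sigma> \<tau>) \<le> cmod c * op_norm d X"
proof (rule op_norm_leI)
  fix v assume v: "vec_norm d v \<le> 1"
  have "op_apply d (\<lambda>\<sigma> \<tau>. c * X \<sigma> \<tau>) v = (\<lambda>\<sigma>. c * op_apply d X v \<sigma>)"
    unfolding op_apply_def by (simp add: sum_distrib_left mult.assoc)
  then have "vec_norm d (op_apply d (\<lambda>\<sigma> \<tau>. c * X \<sigma> \<tau>) v) = cmod c * vec_norm d (op_apply d X v)"
    by (simp add: vec_norm_scale)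
  also have "\<dots> \<le> cmod c * op_norm d X"
    by (rule mult_left_mono[OF vec_norm_op_apply_le_op_norm[OF v]]) simp
  finally show "vec_norm d (op_apply d (\<lambda>\<sigma> \<tau>. c * X \<sigma> \<tau>) v) \<le> cmod c * op_norm d X" .
qed

lemma op_apply_diff: "op_apply d (op_diff X Y) v = (\<lambda>\<sigma>. op_apply d X v \<sigma> - op_apply d Y v \<sigma>)"
  unfolding op_apply_def op_diff_def by (simp add: sum_subtractf algebra_simps)

lemma op_norm_diff_triangle:
  fixes d :: "'a::finite \<Rightarrow> nat"
  shows "op_norm d (op_diff X Z) \<le> op_norm d (op_diff X Y) + op_norm d (op_diff Y Z)"
proof (rule op_norm_leI)
  fix v assume v: "vec_norm d v \<le> 1"
  let ?u = "op_apply d (op_diff X Y) v" and ?w = "op_apply d (op_diff Y Z) v"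
  have "vec_norm d (op_apply d (op_diff X Z) v) = vec_norm d (\<lambda>\<sigma>. ?u \<sigma> - (- ?w \<sigma>))"
    by (simp add: op_apply_diff)
  also have "\<dots> \<le> vec_norm d ?u + vec_norm d (\<lambda>\<sigma>. - ?w \<sigma>)"
    by (rule vec_norm_diff_le)
  also have "vec_norm d (\<lambda>\<sigma>. - ?w \<sigma>) = vec_norm d ?w"
    by (simp add: vec_norm_def)
  finally show "vec_norm d (op_apply d (op_diff X Z) v) \<le> op_norm d (op_diff X Y) + op_norm d (op_diff Y Z)"
    using vec_norm_op_apply_le_op_norm[OF v, of "op_diff X Y"] vec_norm_op_apply_le_op_norm[OF v, of "op_diff Y Z"]
    by linarith
qed

lemma op_norm_diff_self:
  fixes d :: "'a::finite \<Rightarrow> nat"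
  shows "op_norm d (op_diff X X) = 0"
  using op_norm_le_entry_sum[of d "op_diff X X"] op_norm_nonneg[of d "op_diff X X"]
  by (simp add: op_diff_def entry_sum_def)

lemma eq_if_op_norm_diff_le_0:
  fixes d :: "'a::finite \<Rightarrow> nat"
  assumes "op_norm d (op_diff X Y) \<le> 0" "\<sigma> \<in> conf d" "\<tau> \<in> conf d"
  shows "X \<sigma> \<tau> = Y \<sigma> \<tau>"
proof -
  have "cmod (op_diff X Y \<sigma> \<tau>) \<le> 0"
    using norm_entry_le_op_norm[OF assms(2,3), of "op_diff X Y"] assms(1) by linarith
  then show ?thesis unfolding op_diff_def by simp
qed

section \<open>The matrix exponential and the Heisenberg evolution\<close>

lemma op_mult_assoc:
  fixes d :: "'a::finite \<Rightarrow> nat"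
  shows "op_mult d (op_mult d X Y) Z = op_mult d X (op_mult d Y Z)"
  unfolding op_mult_def
  by (intro ext) (simp add: sum_distrib_left sum_distrib_right mult.assoc, rule sum.swap)

lemma op_mult_id_left:
  fixes d :: "'a::finite \<Rightarrow> nat"
  shows "\<sigma> \<in> conf d \<Longrightarrow> op_mult d op_id X \<sigma> \<tau> = X \<sigma> \<tau>"
proof -
  assume s: "\<sigma> \<in> conf d"
  have "op_mult d op_id X \<sigma> \<tau> = (\<Sum>\<rho>\<in>conf d. if \<sigma> = \<rho> then X \<rho> \<tau> else 0)"
    unfolding op_mult_def op_id_def by (rule sum.cong) auto
  then show ?thesis using s finite_conf[of d] by simp
qed

lemma op_mult_id_right:
  fixes d :: "'a::finite \<Rightarrow> nat"
  shows "\<tau> \<in> conf d \<Longrightarrow> op_mult d X op_id \<sigma> \<tau> = X \<sigma> \<tau>"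
proof -
  assume s: "\<tau> \<in> conf d"
  have "op_mult d X op_id \<sigma> \<tau> = (\<Sum>\<rho>\<in>conf d. if \<rho> = \<tau> then X \<sigma> \<rho> else 0)"
    unfolding op_mult_def op_id_def by (rule sum.cong) auto
  then show ?thesis using s finite_conf[of d] by simp
qed

lemma op_mult_cong_right:
  assumes "\<And>\<rho>. \<rho> \<in> conf d \<Longrightarrow> Y \<rho> \<tau> = Y' \<rho> \<tau>"
  shows "op_mult d X Y \<sigma> \<tau> = op_mult d X Y' \<sigma> \<tau>"
  unfolding op_mult_def using assms by (intro sum.cong) auto

lemma op_pow_add:
  fixes d :: "'a::finite \<Rightarrow> nat"
  shows "\<sigma> \<in> conf d \<Longrightarrow> op_mult d (op_pow d X i) (op_pow d X j) \<sigma> \<tau> = op_pow d X (i+j) \<sigma> \<tau>"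
proof (induction i arbitrary: \<sigma>)
  case 0
  then show ?case by (simp add: op_mult_id_left)
next
  case (Suc i)
  have "op_mult d (op_pow d X (Suc i)) (op_pow d X j) \<sigma> \<tau>
        = op_mult d X (op_mult d (op_pow d X i) (op_pow d X j)) \<sigma> \<tau>"
    by (simp add: op_mult_assoc)
  also have "\<dots> = op_mult d X (op_pow d X (i+j)) \<sigma> \<tau>"
    by (rule op_mult_cong_right) (rule Suc.IH)
  finally show ?case by simp
qed

lemma op_pow_scale:
  "op_pow d (\<lambda>\<sigma> \<tau>. z * X \<sigma> \<tau>) k = (\<lambda>\<sigma> \<tau>. z^k * op_pow d X k \<sigma> \<tau>)"
proof (induction k)
  case 0
  then show ?case by simp
next
  case (Suc k)
  then show ?case
    by (intro ext) (simp add: op_mult_def sum_distrib_left mult_ac)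
qed

lemma norm_op_pow_le:
  fixes d :: "'a::finite \<Rightarrow> nat"
  shows "\<sigma> \<in> conf d \<Longrightarrow> cmod (op_pow d X k \<sigma> \<tau>) \<le> entry_sum d X ^ k"
proof (induction k arbitrary: \<sigma>)
  case 0
  then show ?case by (simp add: op_id_def)
next
  case (Suc k)
  have "cmod (op_pow d X (Suc k) \<sigma> \<tau>) \<le> (\<Sum>\<rho>\<in>conf d. cmod (X \<sigma> \<rho>) * cmod (op_pow d X k \<rho> \<tau>))"
    by (simp add: op_mult_def norm_sum norm_mult order_trans[OF norm_sum])
  also have "\<dots> \<le> (\<Sum>\<rho>\<in>conf d. cmod (X \<sigma> \<rho>) * entry_sum d X ^ k)"
    by (rule sum_mono) (simp add: Suc.IH mult_left_mono)
  also have "\<dots> \<le> entry_sum d X * entry_sum d X ^ k"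
    by (simp add: sum_distrib_right[symmetric] mult_right_mono row_sum_le_entry_sum[OF Suc.prems] entry_sum_nonneg)
  finally show ?case by simp
qed

definition op_exp_series :: "('a \<Rightarrow> nat) \<Rightarrow> 'a qop \<Rightarrow> complex \<Rightarrow> 'a qop" where
  "op_exp_series d X z = (\<lambda>\<sigma> \<tau>. \<Sum>k. (op_pow d X k \<sigma> \<tau> / of_nat (fact k)) * z^k)"

lemma op_exp_scale_eq_series: "op_exp d (\<lambda>\<sigma> \<tau>. z * X \<sigma> \<tau>) = op_exp_series d X z"
  unfolding op_exp_def op_exp_series_def op_pow_scale by (intro ext) (simp add: mult_ac)

lemma summable_norm_op_exp_series:
  fixes d :: "'a::finite \<Rightarrow> nat"
  assumes "\<sigma> \<in> conf d"
  shows "summable (\<lambda>k. norm (op_pow d X k \<sigma> \<tau> / of_nat (fact k) * z^k))"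
proof (rule summable_comparison_test[OF _ summable_exp[of "entry_sum d X * cmod z"]])
  show "\<exists>N. \<forall>n\<ge>N. norm (norm (op_pow d X n \<sigma> \<tau> / of_nat (fact n) * z^n)) \<le> inverse (fact n) * (entry_sum d X * cmod z)^n"
  proof (intro exI allI impI)
    fix n :: nat
    have "norm (norm (op_pow d X n \<sigma> \<tau> / of_nat (fact n) * z^n)) = cmod (op_pow d X n \<sigma> \<tau>) * cmod z ^ n / fact n"
      by (simp add: norm_mult norm_divide norm_power)
    also have "\<dots> \<le> entry_sum d X ^ n * cmod z ^ n / fact n"
      by (intro divide_right_mono mult_right_mono norm_op_pow_le[OF assms]) auto
    also have "\<dots> = inverse (fact n) * (entry_sum d X * cmod z)^n"
      by (simp add: power_mult_distrib field_simps)
    finally show "norm (norm (op_pow d X n \<sigma> \<tau> / of_nat (fact n) * z^n)) \<le> inverse (fact n) * (entry_sum d X * cmod z)^n" .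
  qed
qed

lemma summable_op_exp_series:
  fixes d :: "'a::finite \<Rightarrow> nat"
  assumes "\<sigma> \<in> conf d"
  shows "summable (\<lambda>k. op_pow d X k \<sigma> \<tau> / of_nat (fact k) * z^k)"
  by (rule summable_norm_cancel[OF summable_norm_op_exp_series[OF assms]])

lemma op_exp_series_zero:
  fixes d :: "'a::finite \<Rightarrow> nat"
  shows "op_exp_series d X 0 \<sigma> \<tau> = op_id \<sigma> \<tau>"
  unfolding op_exp_series_def using powser_zero[of "\<lambda>k. op_pow d X k \<sigma> \<tau> / of_nat (fact k)"] by simp

lemma sum_binomial_over_fact:
  fixes z w :: "'b::field_char_0"
  shows "(\<Sum>i\<le>n. z ^ i * w ^ (n - i) / (fact i * fact (n - i))) = (z + w) ^ n / fact n"
proof -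
  have "(\<Sum>i\<le>n. z ^ i * w ^ (n - i) / (fact i * fact (n - i)))
      = (\<Sum>i\<le>n. of_nat (n choose i) * z ^ i * w ^ (n - i)) / fact n"
    unfolding sum_divide_distrib by (intro sum.cong refl) (simp add: binomial_fact)
  also have "\<dots> = (z + w) ^ n / fact n"
    by (simp only: binomial_ring)
  finally show ?thesis .
qed

lemma op_exp_series_add:
  fixes d :: "'a::finite \<Rightarrow> nat"
  assumes s: "\<sigma> \<in> conf d" and t: "\<tau> \<in> conf d"
  shows "op_mult d (op_exp_series d X z) (op_exp_series d X w) \<sigma> \<tau> = op_exp_series d X (z + w) \<sigma> \<tau>"
proof -
  define a where "a = (\<lambda>\<rho> k. op_pow d X k \<sigma> \<rho> / of_nat (fact k) * z^k)"
  define b where "b = (\<lambda>\<rho> k. op_pow d X k \<rho> \<tau> / of_nat (fact k) * w^k)"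
  have summable: "summable (\<lambda>k. norm (a \<rho> k))" "summable (\<lambda>k. norm (b \<rho> k))" if "\<rho> \<in> conf d" for \<rho>
    unfolding a_def b_def using summable_norm_op_exp_series[OF s] summable_norm_op_exp_series[OF that]
    by simp_all
  have "op_mult d (op_exp_series d X z) (op_exp_series d X w) \<sigma> \<tau> = (\<Sum>\<rho>\<in>conf d. (\<Sum>k. a \<rho> k) * (\<Sum>k. b \<rho> k))"
    unfolding op_mult_def op_exp_series_def a_def b_def by simp
  also have "\<dots> = (\<Sum>\<rho>\<in>conf d. \<Sum>n. \<Sum>i\<le>n. a \<rho> i * b \<rho> (n - i))"
    using summable by (intro sum.cong refl Cauchy_product)
  also have "\<dots> = (\<Sum>n. \<Sum>\<rho>\<in>conf d. \<Sum>i\<le>n. a \<rho> i * b \<rho> (n - i))"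
    using summable by (intro suminf_sum[symmetric] summable_Cauchy_product)
  also have "\<dots> = (\<Sum>n. op_pow d X n \<sigma> \<tau> / of_nat (fact n) * (z + w)^n)"
  proof (rule suminf_cong)
    fix n
    have "(\<Sum>\<rho>\<in>conf d. a \<rho> i * b \<rho> (n - i))
        = z ^ i * w ^ (n - i) / (fact i * fact (n - i)) * op_pow d X n \<sigma> \<tau>" if "i \<le> n" for i
    proof -
      have "(\<Sum>\<rho>\<in>conf d. a \<rho> i * b \<rho> (n - i))
          = z ^ i * w ^ (n - i) / (fact i * fact (n - i)) * op_mult d (op_pow d X i) (op_pow d X (n - i)) \<sigma> \<tau>"
        unfolding a_def b_def op_mult_def by (simp add: sum_distrib_left mult_ac)
      then show ?thesis using op_pow_add[OF s, of X i "n - i" \<tau>] that by simp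
    qed
    then have "(\<Sum>\<rho>\<in>conf d. \<Sum>i\<le>n. a \<rho> i * b \<rho> (n - i))
        = (\<Sum>i\<le>n. z ^ i * w ^ (n - i) / (fact i * fact (n - i))) * op_pow d X n \<sigma> \<tau>"
      by (subst sum.swap) (simp add: sum_distrib_right)
    then show "(\<Sum>\<rho>\<in>conf d. \<Sum>i\<le>n. a \<rho> i * b \<rho> (n - i)) = op_pow d X n \<sigma> \<tau> / of_nat (fact n) * (z + w)^n"
      by (simp add: sum_binomial_over_fact)
  qed
  finally show ?thesis unfolding op_exp_series_def by simp
qed

lemma hermitian_sum:
  assumes "\<And>Z. Z \<in> U \<Longrightarrow> hermitian d (F Z)"
  shows "hermitian d (\<lambda>\<sigma> \<tau>. \<Sum>Z\<in>U. F Z \<sigma> \<tau>)"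
  unfolding hermitian_def cnj_sum
proof (intro ballI sum.cong refl)
  fix \<sigma> \<tau> Z assume "\<sigma> \<in> conf d" "\<tau> \<in> conf d" "Z \<in> U"
  then show "F Z \<sigma> \<tau> = cnj (F Z \<tau> \<sigma>)" using assms unfolding hermitian_def by blast
qed

lemma cnj_op_pow_hermitian:
  fixes d :: "'a::finite \<Rightarrow> nat"
  assumes H: "hermitian d H" and s: "\<sigma> \<in> conf d" and t: "\<tau> \<in> conf d"
  shows "cnj (op_pow d H k \<sigma> \<tau>) = op_pow d H k \<tau> \<sigma>"
  using s t
proof (induction k arbitrary: \<sigma> \<tau>)
  case 0
  then show ?case by (auto simp: op_id_def)
next
  case (Suc k)
  have "cnj (op_pow d H (Suc k) \<sigma> \<tau>) = (\<Sum>\<rho>\<in>conf d. cnj (H \<sigma> \<rho>) * cnj (op_pow d H k \<rho> \<tau>))"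
    by (simp add: op_mult_def)
  also have "\<dots> = (\<Sum>\<rho>\<in>conf d. op_pow d H k \<tau> \<rho> * op_pow d H 1 \<rho> \<sigma>)"
  proof (rule sum.cong[OF refl])
    fix \<rho> assume r: "\<rho> \<in> conf d"
    have "op_pow d H 1 \<rho> \<sigma> = H \<rho> \<sigma>" using Suc.prems(1) by (simp add: op_mult_id_right)
    moreover have "cnj (H \<sigma> \<rho>) = H \<rho> \<sigma>" using H Suc.prems(1) r unfolding hermitian_def
      by (metis complex_cnj_cnj)
    ultimately show "cnj (H \<sigma> \<rho>) * cnj (op_pow d H k \<rho> \<tau>) = op_pow d H k \<tau> \<rho> * op_pow d H 1 \<rho> \<sigma>"
      using Suc.IH[OF r Suc.prems(2)] by simp
  qed
  also have "\<dots> = op_pow d H (k + 1) \<tau> \<sigma>"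
    using op_pow_add[OF Suc.prems(2), of H k 1 \<sigma>] by (simp add: op_mult_def)
  finally show ?case by simp
qed

lemma cnj_op_exp_series:
  fixes d :: "'a::finite \<Rightarrow> nat"
  assumes H: "hermitian d H" and s: "\<sigma> \<in> conf d" and t: "\<tau> \<in> conf d"
  shows "cnj (op_exp_series d H z \<sigma> \<tau>) = op_exp_series d H (cnj z) \<tau> \<sigma>"
proof -
  have "(\<lambda>k. op_pow d H k \<sigma> \<tau> / of_nat (fact k) * z^k) sums op_exp_series d H z \<sigma> \<tau>"
    unfolding op_exp_series_def using summable_op_exp_series[OF s] by (rule summable_sums)
  then have "(\<lambda>k. cnj (op_pow d H k \<sigma> \<tau> / of_nat (fact k) * z^k)) sums cnj (op_exp_series d H z \<sigma> \<tau>)"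
    by (simp only: sums_cnj)
  then have "(\<lambda>k. op_pow d H k \<tau> \<sigma> / of_nat (fact k) * (cnj z)^k) sums cnj (op_exp_series d H z \<sigma> \<tau>)"
    using cnj_op_pow_hermitian[OF H s t] by simp
  then show ?thesis unfolding op_exp_series_def by (simp add: sums_iff)
qed

lemma op_apply_mult:
  fixes d :: "'a::finite \<Rightarrow> nat"
  shows "op_apply d (op_mult d A B) v = op_apply d A (op_apply d B v)"
  unfolding op_apply_def op_mult_def
  by (intro ext) (simp add: sum_distrib_left sum_distrib_right mult.assoc, rule sum.swap)

lemma vec_norm_op_apply_unitary:
  fixes d :: "'a::finite \<Rightarrow> nat"
  assumes QR: "\<And>\<sigma> \<tau>. \<sigma> \<in> conf d \<Longrightarrow> \<tau> \<in> conf d \<Longrightarrow> op_mult d Q R \<sigma> \<tau> = op_id \<sigma> \<tau>"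
    and adj: "\<And>\<sigma> \<tau>. \<sigma> \<in> conf d \<Longrightarrow> \<tau> \<in> conf d \<Longrightarrow> cnj (R \<sigma> \<tau>) = Q \<tau> \<sigma>"
  shows "vec_norm d (op_apply d R v) = vec_norm d v"
proof -
  have "complex_of_real ((vec_norm d (op_apply d R v))\<^sup>2)
      = (\<Sum>\<sigma>\<in>conf d. cnj (op_apply d R v \<sigma>) * op_apply d R v \<sigma>)"
    by (rule of_real_vec_norm_square)
  also have "\<dots> = (\<Sum>\<sigma>\<in>conf d. \<Sum>\<rho>\<in>conf d. \<Sum>\<rho>'\<in>conf d. (cnj (v \<rho>) * v \<rho>') * (Q \<rho> \<sigma> * R \<sigma> \<rho>'))"
    unfolding op_apply_def
    by (intro sum.cong refl) (simp add: sum_distrib_left sum_distrib_right adj mult_ac)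
  also have "\<dots> = (\<Sum>\<rho>\<in>conf d. \<Sum>\<sigma>\<in>conf d. \<Sum>\<rho>'\<in>conf d. (cnj (v \<rho>) * v \<rho>') * (Q \<rho> \<sigma> * R \<sigma> \<rho>'))"
    by (rule sum.swap)
  also have "\<dots> = (\<Sum>\<rho>\<in>conf d. \<Sum>\<rho>'\<in>conf d. \<Sum>\<sigma>\<in>conf d. (cnj (v \<rho>) * v \<rho>') * (Q \<rho> \<sigma> * R \<sigma> \<rho>'))"
    by (rule sum.cong[OF refl], rule sum.swap)
  also have "\<dots> = (\<Sum>\<rho>\<in>conf d. \<Sum>\<rho>'\<in>conf d. (cnj (v \<rho>) * v \<rho>') * op_mult d Q R \<rho> \<rho>')"
    unfolding op_mult_def by (simp add: sum_distrib_left)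
  also have "\<dots> = (\<Sum>\<rho>\<in>conf d. \<Sum>\<rho>'\<in>conf d. (cnj (v \<rho>) * v \<rho>') * op_id \<rho> \<rho>')"
    by (intro sum.cong refl) (simp add: QR)
  also have "\<dots> = (\<Sum>\<rho>\<in>conf d. cnj (v \<rho>) * v \<rho>)"
    unfolding op_id_def using finite_conf[of d]
    by (simp add: if_distrib sum.delta' cong: if_cong)
  also have "\<dots> = complex_of_real ((vec_norm d v)\<^sup>2)"
    by (rule of_real_vec_norm_square[symmetric])
  finally have "(vec_norm d (op_apply d R v))\<^sup>2 = (vec_norm d v)\<^sup>2"
    using of_real_eq_iff by blast
  then show ?thesis using vec_norm_nonneg
    by (metis power2_eq_iff_nonneg)
qed

lemma heis_eq_op_exp_series:
  "heis d H t X = op_mult d (op_mult d (op_exp_series d H (\<i> * of_real t)) X) (op_exp_series d H (- \<i> * of_real t))"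
  unfolding heis_def op_exp_scale_eq_series[symmetric] by simp

lemma op_norm_heis_le:
  fixes d :: "'a::finite \<Rightarrow> nat"
  assumes H: "hermitian d H"
  shows "op_norm d (heis d H t X) \<le> op_norm d X"
proof (rule op_norm_leI)
  fix v assume v: "vec_norm d v \<le> 1"
  let ?U = "op_exp_series d H (\<i> * of_real t)" and ?V = "op_exp_series d H (- \<i> * of_real t)"
  have UV: "op_mult d ?U ?V \<sigma> \<tau> = op_id \<sigma> \<tau>" if "\<sigma> \<in> conf d" "\<tau> \<in> conf d" for \<sigma> \<tau>
    using op_exp_series_add[OF that, of H "\<i> * of_real t" "- \<i> * of_real t"] op_exp_series_zero[of d H \<sigma> \<tau>] by simp
  have VU: "op_mult d ?V ?U \<sigma> \<tau> = op_id \<sigma> \<tau>" if "\<sigma> \<in> conf d" "\<tau> \<in> conf d" for \<sigma> \<tau>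
    using op_exp_series_add[OF that, of H "- \<i> * of_real t" "\<i> * of_real t"] op_exp_series_zero[of d H \<sigma> \<tau>] by simp
  have aU: "cnj (?U \<sigma> \<tau>) = ?V \<tau> \<sigma>" if "\<sigma> \<in> conf d" "\<tau> \<in> conf d" for \<sigma> \<tau>
    using cnj_op_exp_series[OF H that] by simp
  have aV: "cnj (?V \<sigma> \<tau>) = ?U \<tau> \<sigma>" if "\<sigma> \<in> conf d" "\<tau> \<in> conf d" for \<sigma> \<tau>
    using cnj_op_exp_series[OF H that] by simp
  have "vec_norm d (op_apply d (heis d H t X) v) = vec_norm d (op_apply d X (op_apply d ?V v))"
    unfolding heis_eq_op_exp_series op_apply_mult by (rule vec_norm_op_apply_unitary[OF VU aU])
  also have "\<dots> \<le> op_norm d X"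
    using vec_norm_op_apply_unitary[of d ?U ?V, OF UV aV] v by (simp add: vec_norm_op_apply_le_op_norm)
  finally show "vec_norm d (op_apply d (heis d H t X) v) \<le> op_norm d X" .
qed

lemma isCont_op_exp_series:
  fixes d :: "'a::finite \<Rightarrow> nat"
  assumes "\<sigma> \<in> conf d"
  shows "isCont (\<lambda>z. op_exp_series d H z \<sigma> \<tau>) z"
  unfolding op_exp_series_def
  by (rule isCont_powser_converges_everywhere) (rule summable_op_exp_series[OF assms])

lemma continuous_on_op_exp_series:
  fixes d :: "'a::finite \<Rightarrow> nat"
  assumes "\<sigma> \<in> conf d"
  shows "continuous_on UNIV (\<lambda>t::real. op_exp_series d H (c * of_real t) \<sigma> \<tau>)"
proof (rule continuous_at_imp_continuous_on, intro ballI)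
  fix t :: real
  show "isCont (\<lambda>t::real. op_exp_series d H (c * of_real t) \<sigma> \<tau>) t"
    by (rule isCont_o2[OF _ isCont_op_exp_series[OF assms]]) (intro continuous_intros)
qed

lemma continuous_on_heis:
  fixes d :: "'a::finite \<Rightarrow> nat"
  assumes "\<sigma> \<in> conf d"
  shows "continuous_on UNIV (\<lambda>t. heis d H t X \<sigma> \<tau>)"
proof -
  have e: "(\<lambda>t. heis d H t X \<sigma> \<tau>) = (\<lambda>t. \<Sum>\<rho>\<in>conf d. (\<Sum>\<rho>'\<in>conf d. op_exp_series d H (\<i> * of_real t) \<sigma> \<rho>' * X \<rho>' \<rho>) * op_exp_series d H (- \<i> * of_real t) \<rho> \<tau>)"
    unfolding heis_eq_op_exp_series op_mult_def by simp
  show ?thesis unfolding e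
    by (intro continuous_on_sum continuous_on_mult continuous_on_const continuous_on_op_exp_series assms) auto
qed

lemma heis_measurable:
  fixes d :: "'a::finite \<Rightarrow> nat"
  assumes "\<sigma> \<in> conf d"
  shows "(\<lambda>t. heis d H t X \<sigma> \<tau>) \<in> borel_measurable borel"
  by (rule borel_measurable_continuous_onI[OF continuous_on_heis[OF assms]])

lemma heis_uniformly_close:
  fixes d :: "'a::finite \<Rightarrow> nat"
  assumes w: "\<omega> > 0"
  shows "\<exists>\<delta>>0. \<forall>t s. \<bar>t\<bar> \<le> T \<longrightarrow> \<bar>s\<bar> \<le> T \<longrightarrow> \<bar>t - s\<bar> < \<delta> \<longrightarrow>
           op_norm d (op_diff (heis d H t X) (heis d H s X)) < \<omega>"
proof -
  define D where "D = (\<lambda>p::real\<times>real. \<Sum>\<sigma>\<in>conf d. \<Sum>\<tau>\<in>conf d. cmod (heis d H (fst p) X \<sigma> \<tau> - heis d H (snd p) X \<sigma> \<tau>))"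
  have cD: "continuous_on UNIV D"
    unfolding D_def
    by (intro continuous_on_sum continuous_intros continuous_on_compose2[OF continuous_on_heis]) auto
  have "uniformly_continuous_on ({-T..T} \<times> {-T..T}) D"
    by (rule compact_uniformly_continuous[OF continuous_on_subset[OF cD]]) (auto intro: compact_Times)
  then obtain \<delta> where \<delta>: "\<delta> > 0" and close: "\<And>x x'. x \<in> {-T..T} \<times> {-T..T} \<Longrightarrow> x' \<in> {-T..T} \<times> {-T..T} \<Longrightarrow>
      dist x' x < \<delta> \<Longrightarrow> dist (D x') (D x) < \<omega>"
    unfolding uniformly_continuous_on_def using w by metis
  show ?thesis
  proof (intro exI[of _ \<delta>] conjI \<delta> allI impI)
    fix t s :: real assume t: "\<bar>t\<bar> \<le> T" and s: "\<bar>s\<bar> \<le> T" and ts: "\<bar>t - s\<bar> < \<delta>"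
    have "dist (t, s) (s, s) < \<delta>" using ts by (simp add: dist_Pair_Pair dist_real_def)
    then have "dist (D (t, s)) (D (s, s)) < \<omega>" using t s by (intro close) auto
    moreover have "D (s, s) = 0" unfolding D_def by simp
    ultimately have "D (t, s) < \<omega>" by (simp add: dist_real_def)
    moreover have "op_norm d (op_diff (heis d H t X) (heis d H s X)) \<le> D (t, s)"
      unfolding D_def using op_norm_le_entry_sum[of d "op_diff (heis d H t X) (heis d H s X)"]
      by (simp add: op_diff_def entry_sum_def)
    ultimately show "op_norm d (op_diff (heis d H t X) (heis d H s X)) < \<omega>" by linarith
  qed
qed

section \<open>Integrals of operator-valued functions\<close>

lemma integrable_bounded_mult:
  fixes w :: "'a \<Rightarrow> real" and f :: "'a \<Rightarrow> 'b::{banach, second_countable_topology}"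
  assumes w: "integrable M w" and f: "f \<in> borel_measurable M" and bnd: "\<And>x. norm (f x) \<le> C"
  shows "integrable M (\<lambda>x. w x *\<^sub>R f x)"
proof (rule Bochner_Integration.integrable_bound)
  have C: "C \<ge> 0" using bnd norm_ge_zero order_trans by blast
  show "integrable M (\<lambda>x. w x * C)" using w by simp
  show "(\<lambda>x. w x *\<^sub>R f x) \<in> borel_measurable M"
    using borel_measurable_integrable[OF w] f by (rule borel_measurable_scaleR)
  show "AE x in M. norm (w x *\<^sub>R f x) \<le> norm (w x * C)"
    using bnd C by (intro AE_I2) (simp add: abs_mult mult_left_mono)
qed

lemma integral_rescale:
  fixes f :: "real \<Rightarrow> real"
  assumes "c > 0"
  shows "(LINT t|lborel. c * f (c * t)) = (LINT u|lborel. f u)"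
  using lborel_integral_real_affine[of c f 0] assms by simp

lemma op_apply_integral:
  assumes int: "\<And>\<sigma> \<tau>. \<sigma> \<in> conf d \<Longrightarrow> \<tau> \<in> conf d \<Longrightarrow> integrable M (\<lambda>t. Y t \<sigma> \<tau>)"
    and \<sigma>: "\<sigma> \<in> conf d"
  shows "integrable M (\<lambda>t. op_apply d (Y t) v \<sigma>)"
    and "op_apply d (\<lambda>\<sigma> \<tau>. LINT t|M. Y t \<sigma> \<tau>) v \<sigma> = (LINT t|M. op_apply d (Y t) v \<sigma>)"
proof -
  have int_v: "integrable M (\<lambda>t. Y t \<sigma> \<tau> * v \<tau>)" if "\<tau> \<in> conf d" for \<tau>
    using int[OF \<sigma> that] by simp
  then show "integrable M (\<lambda>t. op_apply d (Y t) v \<sigma>)"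
    unfolding op_apply_def by (intro Bochner_Integration.integrable_sum)
  show "op_apply d (\<lambda>\<sigma> \<tau>. LINT t|M. Y t \<sigma> \<tau>) v \<sigma> = (LINT t|M. op_apply d (Y t) v \<sigma>)"
    unfolding op_apply_def using int_v
    by (simp add: Bochner_Integration.integral_sum integral_mult_left_zero)
qed

text \<open>Pairing \<open>w = (\<integral> Y) v\<close> with itself: \<open>|w|\<^sup>2 = \<integral> \<langle>w, Y t v\<rangle> \<le> |w| \<integral> b\<close>.\<close>
lemma op_norm_integral_le:
  fixes d :: "'a::finite \<Rightarrow> nat" and Y :: "'b \<Rightarrow> 'a qop" and b :: "'b \<Rightarrow> real"
  assumes int: "\<And>\<sigma> \<tau>. \<sigma> \<in> conf d \<Longrightarrow> \<tau> \<in> conf d \<Longrightarrow> integrable M (\<lambda>t. Y t \<sigma> \<tau>)"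
    and b_int: "integrable M b" and bnd: "\<And>t. op_norm d (Y t) \<le> b t"
  shows "op_norm d (\<lambda>\<sigma> \<tau>. LINT t|M. Y t \<sigma> \<tau>) \<le> (LINT t|M. b t)"
proof (rule op_norm_leI)
  fix v assume v: "vec_norm d v \<le> 1"
  define w where "w = op_apply d (\<lambda>\<sigma> \<tau>. LINT t|M. Y t \<sigma> \<tau>) v"
  define h where "h t = (\<Sum>\<sigma>\<in>conf d. cnj (w \<sigma>) * op_apply d (Y t) v \<sigma>)" for t
  have Yv_int: "integrable M (\<lambda>t. op_apply d (Y t) v \<sigma>)" if "\<sigma> \<in> conf d" for \<sigma>
    using op_apply_integral(1)[where d=d and Y=Y, OF int that] .
  have h_int: "integrable M h"
    unfolding h_def using Yv_int
    by (intro Bochner_Integration.integrable_sum Bochner_Integration.integrable_mult_right) auto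
  have "complex_of_real ((vec_norm d w)\<^sup>2) = (\<Sum>\<sigma>\<in>conf d. cnj (w \<sigma>) * w \<sigma>)"
    by (rule of_real_vec_norm_square)
  also have "\<dots> = (\<Sum>\<sigma>\<in>conf d. LINT t|M. cnj (w \<sigma>) * op_apply d (Y t) v \<sigma>)"
    unfolding w_def using op_apply_integral(2)[where d=d and Y=Y, OF int]
    by (intro sum.cong refl) (simp add: integral_mult_right_zero)
  also have "\<dots> = (LINT t|M. h t)"
    unfolding h_def by (rule Bochner_Integration.integral_sum[symmetric])
      (use Yv_int in \<open>auto intro: integrable_mult_right\<close>)
  finally have "(vec_norm d w)\<^sup>2 = cmod (LINT t|M. h t)"
    by (metis norm_of_real abs_of_nonneg zero_le_power2)
  also have "\<dots> \<le> (LINT t|M. cmod (h t))" by (rule integral_norm_bound)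
  also have "\<dots> \<le> (LINT t|M. vec_norm d w * b t)"
  proof (rule Bochner_Integration.integral_mono)
    fix t
    have "cmod (h t) \<le> vec_norm d w * vec_norm d (op_apply d (Y t) v)"
      unfolding h_def by (rule norm_inner_le_vec_norm)
    also have "\<dots> \<le> vec_norm d w * b t"
      using vec_norm_op_apply_le_op_norm[OF v, of "Y t"] bnd[of t]
      by (intro mult_left_mono[OF _ vec_norm_nonneg]) linarith
    finally show "cmod (h t) \<le> vec_norm d w * b t" .
  qed (use h_int b_int in auto)
  also have "\<dots> = vec_norm d w * (LINT t|M. b t)" by simp
  finally have "vec_norm d w * vec_norm d w \<le> vec_norm d w * (LINT t|M. b t)"
    by (simp add: power2_eq_square)
  moreover have "(LINT t|M. b t) \<ge> 0"
    by (rule integral_nonneg_AE) (use bnd op_norm_nonneg order_trans in blast)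
  ultimately show "vec_norm d (op_apply d (\<lambda>\<sigma> \<tau>. LINT t|M. Y t \<sigma> \<tau>) v) \<le> (LINT t|M. b t)"
    unfolding w_def[symmetric] using vec_norm_nonneg[of d w]
    by (metis mult_le_cancel_left_pos order_le_less)
qed

section \<open>Filtering a family of local approximants\<close>

definition local_approximants ::
  "('a \<Rightarrow> nat) \<Rightarrow> 'a set \<Rightarrow> 'a qop \<Rightarrow> 'a qop \<Rightarrow> real \<Rightarrow> (real \<Rightarrow> real) \<Rightarrow> (real \<Rightarrow> 'a qop) \<Rightarrow> bool"
  where
  "local_approximants d S H X T e Y \<longleftrightarrow>
     (\<forall>t. supported_on d S (Y t)) \<and>
     (\<forall>\<sigma>\<in>conf d. \<forall>\<tau>\<in>conf d.
        (\<lambda>t. Y t \<sigma> \<tau>) \<in> borel_measurable borel \<and> (\<exists>M. \<forall>t. cmod (Y t \<sigma> \<tau>) \<le> M)) \<and>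
     (\<forall>t. T \<le> \<bar>t\<bar> \<longrightarrow> Y t = (\<lambda>_ _. 0)) \<and>
     (\<forall>t. \<bar>t\<bar> < T \<longrightarrow> op_norm d (op_diff (heis d H t X) (Y t)) \<le> e t)"

lemma local_approximantsD:
  assumes "local_approximants d S H X T e Y"
  shows "supported_on d S (Y t)"
    and "\<sigma> \<in> conf d \<Longrightarrow> \<tau> \<in> conf d \<Longrightarrow> (\<lambda>t. Y t \<sigma> \<tau>) \<in> borel_measurable borel"
    and "\<sigma> \<in> conf d \<Longrightarrow> \<tau> \<in> conf d \<Longrightarrow> \<exists>M. \<forall>t. cmod (Y t \<sigma> \<tau>) \<le> M"
    and "T \<le> \<bar>t\<bar> \<Longrightarrow> Y t = (\<lambda>_ _. 0)"
    and "\<bar>t\<bar> < T \<Longrightarrow> op_norm d (op_diff (heis d H t X) (Y t)) \<le> e t"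
  using assms unfolding local_approximants_def by blast+

lemma op_norm_diff_local_approximant_le:
  fixes d :: "'a::finite \<Rightarrow> nat"
  assumes H: "hermitian d H" and Y: "local_approximants d S H X T e Y"
  shows "op_norm d (op_diff (heis d H t X) (Y t)) \<le> (if \<bar>t\<bar> < T then e t else op_norm d X)"
proof (cases "\<bar>t\<bar> < T")
  case True
  then show ?thesis using local_approximantsD(5)[OF Y] by simp
next
  case False
  then have "op_diff (heis d H t X) (Y t) = heis d H t X"
    using local_approximantsD(4)[OF Y] by (simp add: op_diff_def)
  then show ?thesis using False op_norm_heis_le[OF H, of t X] by simp
qed

lemma filtered_diff_eq_integral:
  fixes d :: "'a::finite \<Rightarrow> nat"
  assumes H: "hermitian d H" and \<gamma>: "\<gamma> > 0" and G: "integrable lborel G"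
    and \<sigma>: "\<sigma> \<in> conf d" and \<tau>: "\<tau> \<in> conf d"
    and Y_meas: "(\<lambda>t. Y t \<sigma> \<tau>) \<in> borel_measurable borel" and Y_bnd: "\<And>t. cmod (Y t \<sigma> \<tau>) \<le> M"
  defines "w \<equiv> \<lambda>t. \<gamma> * G (\<gamma> * t)"
  shows "integrable lborel (\<lambda>t. of_real (w t) * op_diff (heis d H t X) (Y t) \<sigma> \<tau>)"
    and "op_diff (filtered d H \<gamma> G X) (\<lambda>\<sigma> \<tau>. LINT t|lborel. of_real (w t) * Y t \<sigma> \<tau>) \<sigma> \<tau>
           = (LINT t|lborel. of_real (w t) * op_diff (heis d H t X) (Y t) \<sigma> \<tau>)"
proof -
  have w: "integrable lborel w"
    using lborel_integrable_real_affine[OF G, of \<gamma> 0] \<gamma> unfolding w_def by simp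
  have heis_bnd: "cmod (heis d H t X \<sigma> \<tau>) \<le> op_norm d X" for t
    using norm_entry_le_op_norm[OF \<sigma> \<tau>] op_norm_heis_le[OF H] order_trans by blast
  have "integrable lborel (\<lambda>t. w t *\<^sub>R heis d H t X \<sigma> \<tau>)"
    by (rule integrable_bounded_mult[OF w]) (use heis_measurable[OF \<sigma>] heis_bnd in auto)
  then have int_heis: "integrable lborel (\<lambda>t. of_real (w t) * heis d H t X \<sigma> \<tau>)"
    by (simp add: scaleR_conv_of_real)
  have "integrable lborel (\<lambda>t. w t *\<^sub>R Y t \<sigma> \<tau>)"
    by (rule integrable_bounded_mult[OF w]) (use Y_meas Y_bnd in auto)
  then have int_Y: "integrable lborel (\<lambda>t. of_real (w t) * Y t \<sigma> \<tau>)"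
    by (simp add: scaleR_conv_of_real)
  have diff: "of_real (w t) * op_diff (heis d H t X) (Y t) \<sigma> \<tau>
      = of_real (w t) * heis d H t X \<sigma> \<tau> - of_real (w t) * Y t \<sigma> \<tau>" for t
    by (simp add: op_diff_def right_diff_distrib)
  show "integrable lborel (\<lambda>t. of_real (w t) * op_diff (heis d H t X) (Y t) \<sigma> \<tau>)"
    unfolding diff using int_heis int_Y by simp
  have "filtered d H \<gamma> G X \<sigma> \<tau> = (LINT t|lborel. of_real (w t) * heis d H t X \<sigma> \<tau>)"
    unfolding filtered_def w_def by (simp add: mult.assoc)
  then show "op_diff (filtered d H \<gamma> G X) (\<lambda>\<sigma> \<tau>. LINT t|lborel. of_real (w t) * Y t \<sigma> \<tau>) \<sigma> \<tau>
      = (LINT t|lborel. of_real (w t) * op_diff (heis d H t X) (Y t) \<sigma> \<tau>)"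
    unfolding diff using int_heis int_Y by (simp add: op_diff_def)
qed

lemma filtered_local_approx:
  fixes d :: "'a::finite \<Rightarrow> nat"
  assumes dims: "\<forall>i. d i \<ge> 1" and H: "hermitian d H" and \<gamma>: "\<gamma> > 0"
    and G: "integrable lborel G" and Y: "local_approximants d S H X T e Y"
    and b_int: "integrable lborel (\<lambda>t. \<gamma> * \<bar>G (\<gamma> * t)\<bar> * (if \<bar>t\<bar> < T then e t else op_norm d X))"
  shows "\<exists>W. supported_on d S W \<and> op_norm d (op_diff (filtered d H \<gamma> G X) W)
           \<le> (LINT t|lborel. \<gamma> * \<bar>G (\<gamma> * t)\<bar> * (if \<bar>t\<bar> < T then e t else op_norm d X))"
proof -
  define w where "w t = \<gamma> * G (\<gamma> * t)" for t
  define W where "W = (\<lambda>\<sigma> \<tau>. LINT t|lborel. of_real (w t) * Y t \<sigma> \<tau>)"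
  define D where "D t = (\<lambda>\<sigma> \<tau>. of_real (w t) * op_diff (heis d H t X) (Y t) \<sigma> \<tau>)" for t
  have D: "integrable lborel (\<lambda>t. D t \<sigma> \<tau>)"
    "op_diff (filtered d H \<gamma> G X) W \<sigma> \<tau> = (LINT t|lborel. D t \<sigma> \<tau>)"
    if in_conf: "\<sigma> \<in> conf d" "\<tau> \<in> conf d" for \<sigma> \<tau>
  proof -
    obtain M where "\<And>t. cmod (Y t \<sigma> \<tau>) \<le> M" using local_approximantsD(3)[OF Y in_conf] by blast
    from filtered_diff_eq_integral[where Y=Y and X=X, OF H \<gamma> G in_conf
        local_approximantsD(2)[OF Y in_conf] this]
    show "integrable lborel (\<lambda>t. D t \<sigma> \<tau>)"
      "op_diff (filtered d H \<gamma> G X) W \<sigma> \<tau> = (LINT t|lborel. D t \<sigma> \<tau>)"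
      unfolding W_def D_def w_def by simp_all
  qed
  have "op_norm d (D t) \<le> \<gamma> * \<bar>G (\<gamma> * t)\<bar> * (if \<bar>t\<bar> < T then e t else op_norm d X)" for t
  proof -
    have "op_norm d (D t) \<le> \<bar>w t\<bar> * op_norm d (op_diff (heis d H t X) (Y t))"
      unfolding D_def using op_norm_scale_le[of d "of_real (w t)"] by simp
    also have "\<dots> \<le> \<bar>w t\<bar> * (if \<bar>t\<bar> < T then e t else op_norm d X)"
      by (rule mult_left_mono[OF op_norm_diff_local_approximant_le[OF H Y]]) simp
    finally show ?thesis unfolding w_def using \<gamma> by (simp add: abs_mult)
  qed
  then have "op_norm d (\<lambda>\<sigma> \<tau>. LINT t|lborel. D t \<sigma> \<tau>)
      \<le> (LINT t|lborel. \<gamma> * \<bar>G (\<gamma> * t)\<bar> * (if \<bar>t\<bar> < T then e t else op_norm d X))"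
    using D(1) b_int by (intro op_norm_integral_le)
  moreover have "op_norm d (op_diff (filtered d H \<gamma> G X) W) = op_norm d (\<lambda>\<sigma> \<tau>. LINT t|lborel. D t \<sigma> \<tau>)"
    by (rule op_norm_cong) (rule D(2))
  moreover have "supported_on d S W"
    unfolding W_def by (intro supported_on_integral[OF dims] supported_on_scale local_approximantsD(1)[OF Y])
  ultimately show ?thesis by auto
qed

lemma filtered_local_approx_linear:
  fixes d :: "'a::finite \<Rightarrow> nat"
  assumes dims: "\<forall>i. d i \<ge> 1" and H: "hermitian d H" and \<gamma>: "\<gamma> > 0" and T: "T > 0"
    and G: "integrable lborel G" and Y: "local_approximants d S H X T (\<lambda>t. \<omega> + a * \<bar>t\<bar> / T) Y"
  shows "\<exists>W. supported_on d S W \<and> op_norm d (op_diff (filtered d H \<gamma> G X) W)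
           \<le> (LINT u|lborel. \<bar>G u\<bar> * (if \<bar>u\<bar> < \<gamma> * T then \<omega> + a * \<bar>u\<bar> / (\<gamma> * T) else op_norm d X))"
proof -
  define p where "p = (\<lambda>u. if \<bar>u\<bar> < \<gamma> * T then \<omega> + a * \<bar>u\<bar> / (\<gamma> * T) else op_norm d X)"
  define f where "f = (\<lambda>u. \<bar>G u\<bar> * p u)"
  have rescaled: "\<gamma> * \<bar>G (\<gamma> * t)\<bar> * (if \<bar>t\<bar> < T then \<omega> + a * \<bar>t\<bar> / T else op_norm d X) = \<gamma> * f (\<gamma> * t)"
    for t unfolding f_def p_def using \<gamma> by (simp add: abs_mult)
  have "p \<in> borel_measurable borel" unfolding p_def by measurable
  then have p_meas: "p \<in> borel_measurable lborel" by simp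
  have p_bnd: "norm (p u) \<le> \<bar>\<omega>\<bar> + \<bar>a\<bar> + op_norm d X" for u
  proof (cases "\<bar>u\<bar> < \<gamma> * T")
    case True
    then have "\<bar>a * \<bar>u\<bar> / (\<gamma> * T)\<bar> \<le> \<bar>a\<bar>"
      using \<gamma> T by (simp add: abs_mult divide_le_eq mult_left_mono)
    moreover have "norm (p u) = \<bar>\<omega> + a * \<bar>u\<bar> / (\<gamma> * T)\<bar>" unfolding p_def using True by simp
    ultimately show ?thesis
      using abs_triangle_ineq[of \<omega> "a * \<bar>u\<bar> / (\<gamma> * T)"] op_norm_nonneg[of d X] by linarith
  next
    case False
    then show ?thesis unfolding p_def using op_norm_nonneg[of d X] by simp
  qed
  have "integrable lborel f"
    using integrable_bounded_mult[OF integrable_abs[OF G] p_meas p_bnd] unfolding f_def by simp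
  then have "integrable lborel (\<lambda>t. \<gamma> * f (\<gamma> * t))"
    using lborel_integrable_real_affine[of f \<gamma> 0] \<gamma> by simp
  then have "\<exists>W. supported_on d S W \<and> op_norm d (op_diff (filtered d H \<gamma> G X) W)
      \<le> (LINT t|lborel. \<gamma> * f (\<gamma> * t))"
    using filtered_local_approx[OF dims H \<gamma> G Y] unfolding rescaled by blast
  then have "\<exists>W. supported_on d S W \<and> op_norm d (op_diff (filtered d H \<gamma> G X) W) \<le> (LINT u|lborel. f u)"
    unfolding integral_rescale[OF \<gamma>, of f] .
  then show ?thesis unfolding f_def p_def .
qed

section \<open>Constructing local approximants\<close>

text \<open>Rounding towards \<open>0\<close> keeps the Lieb-Robinson error at the grid point below the one at \<open>t\<close>.\<close>
definition grid_point :: "nat \<Rightarrow> int \<Rightarrow> real" where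
  "grid_point N k = (if k \<ge> 0 then real_of_int k / real N else real_of_int (k + 1) / real N)"

lemma grid_point_floor:
  assumes N: "N > 0"
  shows "\<bar>grid_point N \<lfloor>real N * t\<rfloor>\<bar> \<le> \<bar>t\<bar>" and "\<bar>t - grid_point N \<lfloor>real N * t\<rfloor>\<bar> \<le> 1 / real N"
proof -
  define k where "k = \<lfloor>real N * t\<rfloor>"
  have k: "real_of_int k \<le> real N * t" "real N * t < real_of_int k + 1"
    unfolding k_def by linarith+
  have Np: "real N > 0" using N by simp
  show "\<bar>grid_point N \<lfloor>real N * t\<rfloor>\<bar> \<le> \<bar>t\<bar>"
  proof (cases "k \<ge> 0")
    case True
    then have "real_of_int k / real N \<le> t" "0 \<le> real_of_int k / real N"
      using k Np by (auto simp: field_simps)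
    then show ?thesis using True unfolding grid_point_def k_def[symmetric] by auto
  next
    case False
    then have "real_of_int (k + 1) / real N \<le> 0" "t < real_of_int (k + 1) / real N"
      using k Np by (auto simp: field_simps divide_nonpos_pos)
    then have "\<bar>real_of_int (k + 1) / real N\<bar> \<le> \<bar>t\<bar>" by (simp add: abs_if)
    then show ?thesis using False unfolding grid_point_def k_def[symmetric] by auto
  qed
  show "\<bar>t - grid_point N \<lfloor>real N * t\<rfloor>\<bar> \<le> 1 / real N"
  proof (cases "k \<ge> 0")
    case True
    have "real_of_int k / real N \<le> t" "t < real_of_int k / real N + 1 / real N"
      using k Np by (auto simp: field_simps)
    then show ?thesis using True unfolding grid_point_def k_def[symmetric] by auto
  next
    case False
    have "real_of_int (k + 1) / real N - 1 / real N \<le> t" "t < real_of_int (k + 1) / real N"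
      using k Np by (auto simp: field_simps)
    then show ?thesis using False unfolding grid_point_def k_def[symmetric] by auto
  qed
qed

lemma floor_mult_in_range:
  fixes t T :: real
  assumes "\<bar>t\<bar> < T"
  shows "\<lfloor>real N * t\<rfloor> \<in> {-\<lceil>real N * T\<rceil>..\<lceil>real N * T\<rceil>}"
proof -
  have "real N * (-T) \<le> real N * t" "real N * t \<le> real N * T"
    using assms by (intro mult_left_mono; simp)+
  then show ?thesis by (auto simp: le_floor_iff floor_le_iff ceiling_le_iff) linarith+
qed

lemma grid_family_measurable_bounded:
  fixes Xs :: "int \<Rightarrow> 'a qop" and N :: nat
  assumes Y: "\<And>t. Y t = (if \<bar>t\<bar> < T then Xs \<lfloor>real N * t\<rfloor> else (\<lambda>_ _. 0))"
  shows "(\<lambda>t. Y t \<sigma> \<tau>) \<in> borel_measurable borel" and "\<exists>M. \<forall>t. cmod (Y t \<sigma> \<tau>) \<le> M"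
proof -
  have entry: "Y t \<sigma> \<tau> = (if \<bar>t\<bar> < T then Xs \<lfloor>real N * t\<rfloor> \<sigma> \<tau> else 0)" for t
    using Y by simp
  have "(\<lambda>t. \<lfloor>real N * t\<rfloor>) \<in> measurable borel (count_space UNIV)" by measurable
  then have [measurable]: "(\<lambda>t. Xs \<lfloor>real N * t\<rfloor> \<sigma> \<tau>) \<in> borel_measurable borel"
    using measurable_compose_countable[of "\<lambda>k t. Xs k \<sigma> \<tau>" borel] by simp
  show "(\<lambda>t. Y t \<sigma> \<tau>) \<in> borel_measurable borel" unfolding entry by measurable
  have "cmod (Y t \<sigma> \<tau>) \<le> (\<Sum>k\<in>{-\<lceil>real N * T\<rceil>..\<lceil>real N * T\<rceil>}. cmod (Xs k \<sigma> \<tau>))" for t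
    using member_le_sum[of "\<lfloor>real N * t\<rfloor>" _ "\<lambda>k. cmod (Xs k \<sigma> \<tau>)"] floor_mult_in_range[of t T N]
    unfolding entry by (simp add: sum_nonneg)
  then show "\<exists>M. \<forall>t. cmod (Y t \<sigma> \<tau>) \<le> M" by blast
qed

lemma approximants_choice:
  assumes approx: "\<And>t. \<bar>t\<bar> \<le> T \<Longrightarrow>
      \<exists>X'. supported_on d S X' \<and> op_norm d (op_diff (heis d H t X) X') \<le> a * \<bar>t\<bar> / T"
  obtains Xs where "\<And>k. supported_on d S (Xs k)"
    and "\<And>k. \<bar>s k\<bar> \<le> T \<Longrightarrow> op_norm d (op_diff (heis d H (s k) X) (Xs k)) \<le> a * \<bar>s k\<bar> / T"
proof -
  have "\<forall>k. \<exists>X'. supported_on d S X' \<and>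
      (\<bar>s k\<bar> \<le> T \<longrightarrow> op_norm d (op_diff (heis d H (s k) X) X') \<le> a * \<bar>s k\<bar> / T)"
  proof
    fix k
    show "\<exists>X'. supported_on d S X' \<and>
        (\<bar>s k\<bar> \<le> T \<longrightarrow> op_norm d (op_diff (heis d H (s k) X) X') \<le> a * \<bar>s k\<bar> / T)"
      using approx[of "s k"] supported_on_zero[of d S] by (cases "\<bar>s k\<bar> \<le> T") blast+
  qed
  from choice[OF this] show ?thesis using that by blast
qed

lemma local_approximants_grid:
  fixes d :: "'a::finite \<Rightarrow> nat"
  assumes T: "T > 0" and a: "a \<ge> 0" and \<omega>: "\<omega> > 0"
    and approx: "\<And>t. \<bar>t\<bar> \<le> T \<Longrightarrow>
      \<exists>X'. supported_on d S X' \<and> op_norm d (op_diff (heis d H t X) X') \<le> a * \<bar>t\<bar> / T"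
  shows "\<exists>Y. local_approximants d S H X T (\<lambda>t. \<omega> + a * \<bar>t\<bar> / T) Y"
proof -
  obtain \<delta> where \<delta>: "\<delta> > 0" and close: "\<And>t s. \<bar>t\<bar> \<le> T \<Longrightarrow> \<bar>s\<bar> \<le> T \<Longrightarrow> \<bar>t - s\<bar> < \<delta> \<Longrightarrow>
      op_norm d (op_diff (heis d H t X) (heis d H s X)) < \<omega>"
    using heis_uniformly_close[OF \<omega>, of T d H X] by blast
  obtain N :: nat where N: "N > 0" "1 / real N < \<delta>"
    using reals_Archimedean[OF \<delta>] by (metis inverse_eq_divide of_nat_0_less_iff zero_less_Suc)
  obtain Xs where Xs_supp: "\<And>k. supported_on d S (Xs k)"
    and Xs_err: "\<And>k. \<bar>grid_point N k\<bar> \<le> T \<Longrightarrow>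
      op_norm d (op_diff (heis d H (grid_point N k) X) (Xs k)) \<le> a * \<bar>grid_point N k\<bar> / T"
    using approximants_choice[OF approx] by blast
  define Y where "Y t = (if \<bar>t\<bar> < T then Xs \<lfloor>real N * t\<rfloor> else (\<lambda>_ _. 0))" for t
  have err: "op_norm d (op_diff (heis d H t X) (Y t)) \<le> \<omega> + a * \<bar>t\<bar> / T" if t: "\<bar>t\<bar> < T" for t
  proof -
    define s where "s = grid_point N \<lfloor>real N * t\<rfloor>"
    have s: "\<bar>s\<bar> \<le> \<bar>t\<bar>" "\<bar>t - s\<bar> < \<delta>"
      using grid_point_floor[OF N(1), of t] N(2) unfolding s_def by linarith+
    have "op_norm d (op_diff (heis d H t X) (Y t))
        \<le> op_norm d (op_diff (heis d H t X) (heis d H s X)) + op_norm d (op_diff (heis d H s X) (Y t))"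
      by (rule op_norm_diff_triangle)
    also have "op_norm d (op_diff (heis d H t X) (heis d H s X)) < \<omega>"
      using close[of t s] t s by linarith
    also have "op_norm d (op_diff (heis d H s X) (Y t)) \<le> a * \<bar>s\<bar> / T"
      using Xs_err s t unfolding Y_def s_def by simp
    also have "a * \<bar>s\<bar> / T \<le> a * \<bar>t\<bar> / T"
      using s a T by (intro divide_right_mono mult_left_mono) auto
    finally show ?thesis by simp
  qed
  have "local_approximants d S H X T (\<lambda>t. \<omega> + a * \<bar>t\<bar> / T) Y"
    unfolding local_approximants_def
  proof (intro conjI allI ballI impI)
    fix \<sigma> \<tau>
    show "(\<lambda>t. Y t \<sigma> \<tau>) \<in> borel_measurable borel" "\<exists>M. \<forall>t. cmod (Y t \<sigma> \<tau>) \<le> M"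
      by (rule grid_family_measurable_bounded[of Y T Xs N]; simp add: Y_def)+
  next
    fix t
    show "supported_on d S (Y t)" by (simp add: Y_def Xs_supp supported_on_zero)
    show "T \<le> \<bar>t\<bar> \<Longrightarrow> Y t = (\<lambda>_ _. 0)" by (simp add: Y_def)
    show "\<bar>t\<bar> < T \<Longrightarrow> op_norm d (op_diff (heis d H t X) (Y t)) \<le> \<omega> + a * \<bar>t\<bar> / T"
      by (rule err)
  qed
  then show ?thesis by blast
qed

lemma supported_on_if_op_norm_diff_le_0:
  fixes d :: "'a::finite \<Rightarrow> nat"
  assumes "op_norm d (op_diff X Y) \<le> 0" and "supported_on d S Y"
  shows "supported_on d S X"
  by (rule supported_on_cong[OF _ assms(2)]) (simp add: eq_if_op_norm_diff_le_0[OF assms(1)])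

lemma local_approximants_exact:
  fixes d :: "'a::finite \<Rightarrow> nat"
  assumes H: "hermitian d H" and a: "a \<le> 0" and \<omega>: "\<omega> \<ge> 0"
    and approx: "\<And>t. \<bar>t\<bar> \<le> T \<Longrightarrow>
      \<exists>X'. supported_on d S X' \<and> op_norm d (op_diff (heis d H t X) X') \<le> a * \<bar>t\<bar> / T"
  shows "\<exists>Y. local_approximants d S H X T (\<lambda>t. \<omega> + a * \<bar>t\<bar> / T) Y"
proof -
  define Y where "Y t = (if \<bar>t\<bar> < T then heis d H t X else (\<lambda>_ _. 0))" for t
  have exact: "supported_on d S (heis d H t X) \<and> 0 \<le> a * \<bar>t\<bar> / T" if t: "\<bar>t\<bar> < T" for t
  proof -
    obtain X' where X': "supported_on d S X'" "op_norm d (op_diff (heis d H t X) X') \<le> a * \<bar>t\<bar> / T"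
      using approx[of t] t by auto
    moreover have "a * \<bar>t\<bar> / T \<le> 0"
      using a t by (simp add: divide_nonpos_pos mult_nonpos_nonneg)
    ultimately have "op_norm d (op_diff (heis d H t X) X') \<le> 0" "0 \<le> a * \<bar>t\<bar> / T"
      using op_norm_nonneg[of d "op_diff (heis d H t X) X'"] by linarith+
    then show ?thesis using supported_on_if_op_norm_diff_le_0 X'(1) by blast
  qed
  have "local_approximants d S H X T (\<lambda>t. \<omega> + a * \<bar>t\<bar> / T) Y"
    unfolding local_approximants_def
  proof (intro conjI allI ballI impI)
    fix \<sigma> \<tau> assume \<sigma>: "\<sigma> \<in> conf d" and \<tau>: "\<tau> \<in> conf d"
    have [measurable]: "(\<lambda>t. heis d H t X \<sigma> \<tau>) \<in> borel_measurable borel"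
      by (rule heis_measurable[OF \<sigma>])
    have entry: "Y t \<sigma> \<tau> = (if \<bar>t\<bar> < T then heis d H t X \<sigma> \<tau> else 0)" for t
      unfolding Y_def by simp
    show "(\<lambda>t. Y t \<sigma> \<tau>) \<in> borel_measurable borel" unfolding entry by measurable
    have "cmod (Y t \<sigma> \<tau>) \<le> op_norm d X" for t
      using norm_entry_le_op_norm[OF \<sigma> \<tau>, of "heis d H t X"] op_norm_heis_le[OF H, of t X]
        op_norm_nonneg[of d X]
      unfolding entry by auto
    then show "\<exists>M. \<forall>t. cmod (Y t \<sigma> \<tau>) \<le> M" by blast
  next
    fix t
    show "supported_on d S (Y t)" by (simp add: Y_def exact supported_on_zero)
    show "T \<le> \<bar>t\<bar> \<Longrightarrow> Y t = (\<lambda>_ _. 0)" by (simp add: Y_def)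
    assume t: "\<bar>t\<bar> < T"
    then have "op_norm d (op_diff (heis d H t X) (Y t)) = 0" by (simp add: Y_def op_norm_diff_self)
    then show "op_norm d (op_diff (heis d H t X) (Y t)) \<le> \<omega> + a * \<bar>t\<bar> / T"
      using exact[OF t] \<omega> by simp
  qed
  then show ?thesis by blast
qed

lemma local_approximants_exist:
  fixes d :: "'a::finite \<Rightarrow> nat"
  assumes H: "hermitian d H" and T: "T > 0" and a: "a \<ge> 0"
    and \<omega>: "\<omega> \<ge> 0" "a > 0 \<longrightarrow> \<omega> > 0"
    and approx: "\<And>t. \<bar>t\<bar> \<le> T \<Longrightarrow>
      \<exists>X'. supported_on d S X' \<and> op_norm d (op_diff (heis d H t X) X') \<le> a * \<bar>t\<bar> / T"
  obtains Y where "local_approximants d S H X T (\<lambda>t. \<omega> + a * \<bar>t\<bar> / T) Y"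
proof (cases "\<omega> > 0")
  case True
  then show ?thesis using local_approximants_grid[OF T a True approx] that by blast
next
  case False
  then have "a \<le> 0" using \<omega>(2) by auto
  then show ?thesis using local_approximants_exact[OF H _ \<omega>(1) approx] that by blast
qed

section \<open>The weighted tail integral\<close>

lemma integral_cone_weight_pos:
  fixes G :: "real \<Rightarrow> real"
  assumes G: "integrable lborel G" and L: "L > 0"
    and pos: "(LINT u|lborel. \<bar>G u\<bar> * (if \<bar>u\<bar> < L then 1 else 0)) > 0"
  shows "(LINT u|lborel. \<bar>G u\<bar> * (if \<bar>u\<bar> < L then 1 - \<bar>u\<bar> / L else 0)) > 0"
proof -
  define f where "f = (\<lambda>u. \<bar>G u\<bar> * (if \<bar>u\<bar> < L then 1 - \<bar>u\<bar> / L else 0))"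
  have f_nonneg: "f u \<ge> 0" for u
    unfolding f_def using L by (simp add: divide_le_eq_1_pos)
  have f_int: "integrable lborel f"
    unfolding f_def using integrable_bounded_mult[of lborel "\<lambda>u. \<bar>G u\<bar>"
        "\<lambda>u. if \<bar>u\<bar> < L then 1 - \<bar>u\<bar> / L else 0" 1] G L
    by (simp add: divide_le_eq_1_pos)
  have "(LINT u|lborel. f u) \<noteq> 0"
  proof
    assume "(LINT u|lborel. f u) = 0"
    then have "AE u in lborel. f u = 0"
      using integral_nonneg_eq_0_iff_AE[OF f_int] f_nonneg by simp
    then have "AE u in lborel. \<bar>G u\<bar> * (if \<bar>u\<bar> < L then 1 else 0) = 0"
      by (rule AE_mp) (use L in \<open>auto simp: f_def divide_less_eq_1_pos split: if_splits\<close>)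
    then show False
      using pos by (simp add: integral_eq_zero_AE)
  qed
  moreover have "(LINT u|lborel. f u) \<ge> 0"
    using f_nonneg by (simp add: integral_nonneg_AE)
  ultimately show ?thesis unfolding f_def by linarith
qed

lemma tail_weighted_integral_le:
  fixes G :: "real \<Rightarrow> real"
  assumes G: "integrable lborel G" and L: "L > 0" and a: "a \<ge> 0" and c: "c \<ge> 0"
  shows "\<exists>\<omega>\<ge>0. (a > 0 \<longrightarrow> \<omega> > 0) \<and>
    (LINT u|lborel. \<bar>G u\<bar> * (if \<bar>u\<bar> < L then \<omega> + a * \<bar>u\<bar> / L else c))
      \<le> c * (LINT u:{u. L \<le> \<bar>u\<bar>}|lborel. \<bar>G u\<bar>) + a * (LINT u|lborel. \<bar>G u\<bar>)"
proof -
  define fC where "fC = (\<lambda>u. \<bar>G u\<bar> * (if \<bar>u\<bar> < L then 0 else 1))"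
  define fP where "fP = (\<lambda>u. \<bar>G u\<bar> * (if \<bar>u\<bar> < L then 1 else 0))"
  define fS where "fS = (\<lambda>u. \<bar>G u\<bar> * (if \<bar>u\<bar> < L then 1 - \<bar>u\<bar> / L else 0))"
  define P where "P = (LINT u|lborel. fP u)"
  define s where "s = (LINT u|lborel. fS u)"
  define \<omega> where "\<omega> = (if P = 0 then 1 else a * s / P)"
  have weighted: "integrable lborel (\<lambda>u. \<bar>G u\<bar> * f u)"
    if "f \<in> borel_measurable borel" "\<And>u. \<bar>f u\<bar> \<le> 1" for f
    using integrable_bounded_mult[of lborel "\<lambda>u. \<bar>G u\<bar>" f 1] G that by simp
  have int: "integrable lborel fC" "integrable lborel fP" "integrable lborel fS"
    unfolding fC_def fP_def fS_def using L
    by (intro weighted; simp add: divide_le_eq_1_pos)+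
  have P: "0 \<le> P" "P \<le> (LINT u|lborel. \<bar>G u\<bar>)"
    unfolding P_def fP_def using int(2) G
    by (auto intro!: integral_nonneg_AE Bochner_Integration.integral_mono simp: fP_def)
  have s: "0 \<le> s" "P > 0 \<Longrightarrow> s > 0"
    unfolding s_def fS_def P_def fP_def using integral_cone_weight_pos[OF G L] L
    by (auto intro!: integral_nonneg_AE simp: divide_le_eq_1_pos)
  have \<omega>: "\<omega> \<ge> 0" "a > 0 \<longrightarrow> \<omega> > 0" "\<omega> * P \<le> a * s"
    unfolding \<omega>_def using P s a by auto
  have tail: "(LINT u:{u. L \<le> \<bar>u\<bar>}|lborel. \<bar>G u\<bar>) = (LINT u|lborel. fC u)"
    unfolding set_lebesgue_integral_def fC_def
    by (intro Bochner_Integration.integral_cong refl) (simp add: indicator_def)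
  have "(LINT u|lborel. \<bar>G u\<bar> * (if \<bar>u\<bar> < L then \<omega> + a * \<bar>u\<bar> / L else c))
      = (LINT u|lborel. c * fC u + (\<omega> + a) * fP u - a * fS u)"
    unfolding fC_def fP_def fS_def using L
    by (intro Bochner_Integration.integral_cong refl) (simp add: field_simps)
  also have "\<dots> = c * (LINT u|lborel. fC u) + (\<omega> + a) * P - a * s"
    unfolding P_def s_def using int by simp
  also have "\<dots> \<le> c * (LINT u:{u. L \<le> \<bar>u\<bar>}|lborel. \<bar>G u\<bar>) + a * (LINT u|lborel. \<bar>G u\<bar>)"
    unfolding tail distrib_right using \<omega>(3) mult_left_mono[OF P(2) a] by linarith
  finally show ?thesis using \<omega>(1,2) by blast
qed

theorem lemma2:
  fixes d :: "'a::{finite,metric_space} \<Rightarrow> nat"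
    and HZ :: "'a set \<Rightarrow> 'a qop" and H0 :: "'a qop"
    and R J vLR \<gamma> l :: real and g G :: "real \<Rightarrow> real"
    and A :: "'a set" and Op :: "'a qop"
  assumes dims: "\<forall>i. d i \<ge> 1"
    and H0_def: "H0 = (\<lambda>\<sigma> \<tau>. \<Sum>Z\<in>UNIV. HZ Z \<sigma> \<tau>)"
    and terms: "\<forall>Z. hermitian d (HZ Z) \<and> supported_on d Z (HZ Z)"
    and range: "\<forall>Z. (\<exists>\<sigma>\<in>conf d. \<exists>\<tau>\<in>conf d. HZ Z \<sigma> \<tau> \<noteq> 0) \<longrightarrow> (\<forall>x\<in>Z. \<forall>y\<in>Z. dist x y \<le> R)"
    and strength: "\<forall>i. (\<Sum>Z\<in>{Z. i \<in> Z}. op_norm d (HZ Z)) \<le> J"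
    and vLR_pos: "vLR > 0"
    and g_decay: "\<forall>\<kappa>>0. ((\<lambda>x. g x * exp (\<kappa> * x)) \<longlongrightarrow> 0) at_top"
    and LR: "\<forall>B X r t. supported_on d B X \<and> r > 0 \<and> \<bar>t\<bar> \<le> r / vLR \<longrightarrow>
               (\<exists>X'. supported_on d (bl r B) X' \<and>
                  op_norm d (op_diff (heis d H0 t X) X') \<le> vLR * \<bar>t\<bar> / r * g r * real (card B) * op_norm d X)"
    and gamma_pos: "\<gamma> > 0"
    and G_even: "\<forall>t. G (- t) = G t"
    and G_int: "integrable lborel G"
    and supp: "supported_on d A Op"
    and l_pos: "l > 0"
  shows "\<exists>W. supported_on d (bl l A) W \<and>
           op_norm d (op_diff (filtered d H0 \<gamma> G Op) W)
             \<le> ((LINT u:{u. \<bar>u\<bar> \<ge> l * \<gamma> / vLR}|lborel. \<bar>G u\<bar>)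
                 + g l * real (card A) * (LINT u|lborel. \<bar>G u\<bar>)) * op_norm d Op"
proof -
  have H: "hermitian d H0"
    unfolding H0_def using terms by (intro hermitian_sum) blast
  define T where "T = l / vLR"
  define a where "a = g l * real (card A) * op_norm d Op"
  have T: "T > 0" and \<gamma>T: "\<gamma> * T > 0" "\<gamma> * T = l * \<gamma> / vLR"
    unfolding T_def using l_pos vLR_pos gamma_pos by simp_all
  have approx: "\<exists>X'. supported_on d (bl l A) X' \<and> op_norm d (op_diff (heis d H0 t Op) X') \<le> a * \<bar>t\<bar> / T"
    if t: "\<bar>t\<bar> \<le> T" for t
  proof -
    obtain X' where "supported_on d (bl l A) X'"
      "op_norm d (op_diff (heis d H0 t Op) X') \<le> vLR * \<bar>t\<bar> / l * g l * real (card A) * op_norm d Op"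
      using LR[rule_format, of A Op l t] supp l_pos t unfolding T_def by blast
    moreover have "vLR * \<bar>t\<bar> / l * g l * real (card A) * op_norm d Op = a * \<bar>t\<bar> / T"
      unfolding a_def T_def using vLR_pos l_pos by (simp add: field_simps)
    ultimately show ?thesis by auto
  qed
  have a: "a \<ge> 0"
  proof -
    obtain X' where "op_norm d (op_diff (heis d H0 T Op) X') \<le> a * \<bar>T\<bar> / T"
      using approx[of T] T by auto
    then show ?thesis using op_norm_nonneg[of d "op_diff (heis d H0 T Op) X'"] T by simp
  qed
  obtain \<omega> where \<omega>: "\<omega> \<ge> 0" "a > 0 \<longrightarrow> \<omega> > 0"
    and profile: "(LINT u|lborel. \<bar>G u\<bar> * (if \<bar>u\<bar> < \<gamma> * T then \<omega> + a * \<bar>u\<bar> / (\<gamma> * T) else op_norm d Op))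
      \<le> op_norm d Op * (LINT u:{u. \<gamma> * T \<le> \<bar>u\<bar>}|lborel. \<bar>G u\<bar>) + a * (LINT u|lborel. \<bar>G u\<bar>)"
    using tail_weighted_integral_le[OF G_int \<gamma>T(1) a op_norm_nonneg[of d Op]] by blast
  obtain Y where "local_approximants d (bl l A) H0 Op T (\<lambda>t. \<omega> + a * \<bar>t\<bar> / T) Y"
    using local_approximants_exist[OF H T a \<omega> approx] .
  then obtain W where W: "supported_on d (bl l A) W"
    "op_norm d (op_diff (filtered d H0 \<gamma> G Op) W)
      \<le> (LINT u|lborel. \<bar>G u\<bar> * (if \<bar>u\<bar> < \<gamma> * T then \<omega> + a * \<bar>u\<bar> / (\<gamma> * T) else op_norm d Op))"
    using filtered_local_approx_linear[OF dims H gamma_pos T G_int] by blast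
  have "op_norm d Op * (LINT u:{u. \<gamma> * T \<le> \<bar>u\<bar>}|lborel. \<bar>G u\<bar>) + a * (LINT u|lborel. \<bar>G u\<bar>)
      = ((LINT u:{u. \<bar>u\<bar> \<ge> l * \<gamma> / vLR}|lborel. \<bar>G u\<bar>)
         + g l * real (card A) * (LINT u|lborel. \<bar>G u\<bar>)) * op_norm d Op"
    unfolding \<gamma>T(2) a_def by (simp add: algebra_simps)
  then show ?thesis using W profile by auto
qed

end
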